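(* Let $G$ be a connected graph on $p\ge 6$ vertices that contains no copy of $T_6^1$. Then $e(G)\le 2p-3$.
   Context: All graphs are finite and simple; a graph "contains" $H$ if it has a subgraph isomorphic to $H$; $e(G)$ is the number of edges of $G$. $T_6^1$ is the tree on vertex set $\{v_0,\ldots,v_5\}$ with edges $v_0v_1,v_0v_2,v_0v_3,v_2v_4,v_3v_5$. *)

theory Defs
  imports Main
begin

definition simple_graph :: "'a set \<Rightarrow> 'a set set \<Rightarrow> bool" where
  "simple_graph V E \<longleftrightarrow> finite V \<and> (\<forall>e\<in>E. e \<subseteq> V \<and> card e = 2)"

definition adj :: "'a set set \<Rightarrow> 'a \<Rightarrow> 'a \<Rightarrow> bool" where
  "adj E u v \<longleftrightarrow> {u, v} \<in> E"

definition connected_graph :: "'a set \<Rightarrow> 'a set set \<Rightarrow> bool" where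
  "connected_graph V E \<longleftrightarrow> (\<forall>u\<in>V. \<forall>v\<in>V. (u, v) \<in> {(x, y). adj E x y}\<^sup>*)"

definition T61_edges :: "(nat \<times> nat) set" where
  "T61_edges = {(0,1), (0,2), (0,3), (2,4), (3,5)}"

definition contains_T61 :: "'a set \<Rightarrow> 'a set set \<Rightarrow> bool" where
  "contains_T61 V E \<longleftrightarrow> (\<exists>f. inj_on f {0..5} \<and> f ` {0..5} \<subseteq> V \<and>
      (\<forall>(i, j)\<in>T61_edges. {f i, f j} \<in> E))"

end

theory Submission
  imports Defs
begin

text \<open>
  Proof by induction on \<open>p\<close>. If every degree is at most 3, the handshake lemma gives
  \<open>2e(G) \<le> 3p \<le> 4p - 6\<close>. Otherwise pick a vertex \<open>v\<close> of degree at least 4 with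
  neighbourhood \<open>N\<close>; the edges of \<open>G - v\<close> form a set \<open>H\<close> with \<open>e(G) = |N| + |H|\<close>, so it
  suffices to show \<open>|H| \<le> p - 2\<close>. Let \<open>F \<subseteq> H\<close> be the edges meeting \<open>N\<close>. Freeness of
  \<open>T_6^1\<close> forces the edges of \<open>F\<close> to pairwise intersect, so \<open>F\<close> is empty, a triangle, or a
  star. In each case connectivity confines the vertex set, and either \<open>|H| \<le> p - 2\<close> directly
  (all of \<open>H\<close> forms a star, or \<open>|H| \<le> 3\<close>), or \<open>G\<close> has a leaf and \<open>p \<ge> 7\<close>; in the latter case
  we delete the leaf and apply the induction hypothesis.
\<close>

definition nbr :: "'a set set \<Rightarrow> 'a \<Rightarrow> 'a set" where
  "nbr E x = {y. {x, y} \<in> E}"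

definition leaf :: "'a set set \<Rightarrow> 'a \<Rightarrow> bool" where
  "leaf E l \<longleftrightarrow> (\<exists>u. nbr E l = {u})"

lemma nbr_iff: "y \<in> nbr E x \<longleftrightarrow> {x, y} \<in> E"
  by (simp add: nbr_def)

lemma simple_graph_finite: "simple_graph V E \<Longrightarrow> finite V"
  by (simp add: simple_graph_def)

lemma simple_graph_finite_edges: "simple_graph V E \<Longrightarrow> finite E"
  unfolding simple_graph_def by (metis Pow_iff finite_Pow_iff rev_finite_subset subsetI)

lemma edge_ends:
  assumes "simple_graph V E" "{x, y} \<in> E"
  shows "x \<noteq> y" "x \<in> V" "y \<in> V"
  using assms unfolding simple_graph_def by (auto simp: card_insert_if split: if_splits)

lemma edge_doubleton:
  assumes "simple_graph V E" "e \<in> E"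
  obtains x y where "e = {x, y}" "x \<noteq> y"
  using assms unfolding simple_graph_def by (meson card_2_iff)

lemma card_nbr_incident:
  assumes sg: "simple_graph V E"
  shows "card (nbr E x) = card {e\<in>E. x \<in> e}"
proof -
  have "bij_betw (\<lambda>y. {x, y}) (nbr E x) {e\<in>E. x \<in> e}"
  proof (rule bij_betwI')
    fix y y' assume "y \<in> nbr E x" "y' \<in> nbr E x"
    then show "({x, y} = {x, y'}) = (y = y')"
      using edge_ends[OF sg] by (auto simp: nbr_iff doubleton_eq_iff)
  next
    fix e assume "e \<in> {e\<in>E. x \<in> e}"
    then obtain a b where "e = {a, b}" "e \<in> E" "x \<in> e" using edge_doubleton[OF sg] by blast
    then show "\<exists>y\<in>nbr E x. e = {x, y}" by (auto simp: nbr_iff insert_commute)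
  qed (auto simp: nbr_iff)
  then show ?thesis by (rule bij_betw_same_card)
qed

lemma card_nbr_le:
  assumes sg: "simple_graph V E" and v: "v \<in> V"
  shows "card (nbr E v) \<le> card V - 1"
proof -
  have "nbr E v \<subseteq> V - {v}"
    using edge_ends[OF sg] edge_ends(1)[OF sg, of v v] by (auto simp: nbr_iff)
  then have "card (nbr E v) \<le> card (V - {v})"
    using simple_graph_finite[OF sg] by (intro card_mono) auto
  also have "\<dots> = card V - 1" using v by simp
  finally show ?thesis .
qed

lemma handshake:
  assumes sg: "simple_graph V E"
  shows "(\<Sum>x\<in>V. card (nbr E x)) = 2 * card E"
proof -
  have fV: "finite V" and fE: "finite E"
    using sg by (auto intro: simple_graph_finite simple_graph_finite_edges)
  have "(\<Sum>x\<in>V. card (nbr E x)) = (\<Sum>x\<in>V. \<Sum>e\<in>E. if x \<in> e then 1 else 0)"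
    by (rule sum.cong) (auto simp: card_nbr_incident[OF sg] sum.inter_filter[OF fE, symmetric])
  also have "\<dots> = (\<Sum>e\<in>E. \<Sum>x\<in>V. if x \<in> e then 1 else 0)" by (rule sum.swap)
  also have "\<dots> = (\<Sum>e\<in>E. 2)"
  proof (rule sum.cong)
    fix e assume "e \<in> E"
    then have "e \<subseteq> V" "card e = 2" using sg unfolding simple_graph_def by auto
    then show "(\<Sum>x\<in>V. if x \<in> e then 1 else 0) = (2::nat)"
      by (simp add: sum.inter_filter[OF fV, symmetric] Int_absorb1 Collect_conj_eq[symmetric]
            Int_def[symmetric])
  qed simp
  finally show ?thesis by simp
qed

text \<open>Graphs of maximum degree at most 3 are sparse enough: \<open>2e \<le> 3p \<le> 4p - 6\<close> once \<open>p \<ge> 6\<close>.\<close>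
lemma max_degree_3_bound:
  assumes sg: "simple_graph V E" and deg: "\<forall>x\<in>V. card (nbr E x) \<le> 3" and p: "card V \<ge> 6"
  shows "card E \<le> 2 * card V - 3"
proof -
  have "2 * card E = (\<Sum>x\<in>V. card (nbr E x))" using handshake[OF sg] by simp
  also have "\<dots> \<le> (\<Sum>x\<in>V. 3)" using deg by (intro sum_mono) auto
  also have "\<dots> = 3 * card V" by simp
  finally show ?thesis using p by linarith
qed

lemma connected_closed_subset:
  assumes c: "connected_graph V E" and v: "v \<in> V" "v \<in> S"
    and closed: "\<And>x y. x \<in> S \<Longrightarrow> {x, y} \<in> E \<Longrightarrow> y \<in> S"
  shows "V \<subseteq> S"
proof
  fix u assume "u \<in> V"
  then have "(v, u) \<in> {(x, y). adj E x y}\<^sup>*" using c v unfolding connected_graph_def by blast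
  then show "u \<in> S" by (induction rule: rtrancl_induct) (auto simp: adj_def v closed)
qed

lemma star_edges_bound:
  assumes sg: "simple_graph V E" and H: "H \<subseteq> E" "\<And>e. e \<in> H \<Longrightarrow> v \<notin> e \<and> z \<in> e"
    and z: "z \<noteq> v" "z \<in> V" "v \<in> V"
  shows "card H \<le> card V - 2"
proof -
  have fV: "finite V" using simple_graph_finite[OF sg] .
  have "H \<subseteq> (\<lambda>y. {z, y}) ` (V - {v, z})"
  proof
    fix e assume e: "e \<in> H"
    then obtain a b where ab: "e = {a, b}" "e \<in> E" using H edge_doubleton[OF sg] by blast
    then have "a \<in> V" "b \<in> V" "a \<noteq> b" using edge_ends[OF sg] by auto
    moreover have "v \<notin> e" "z \<in> e" using H(2)[OF e] by auto
    ultimately show "e \<in> (\<lambda>y. {z, y}) ` (V - {v, z})"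
      using ab by (auto simp: image_iff insert_commute)
  qed
  then have "card H \<le> card ((\<lambda>y. {z, y}) ` (V - {v, z}))" using fV by (intro card_mono) auto
  also have "\<dots> \<le> card (V - {v, z})" using card_image_le fV by blast
  also have "\<dots> = card V - 2" using z fV by (simp add: card_Diff_subset)
  finally show ?thesis .
qed

text \<open>Six distinct vertices \<open>c0, c, a, b, a', b'\<close> with edges \<open>c0c, c0a, c0b, aa', bb'\<close> form a
  copy of \<open>T_6^1\<close> (\<open>c0\<close> is the centre, \<open>c\<close> the short leg, \<open>a a'\<close> and \<open>b b'\<close> the long legs).\<close>
lemma contains_T61I:
  assumes sg: "simple_graph V E"
    and edges: "{c0, c} \<in> E" "{c0, a} \<in> E" "{c0, b} \<in> E" "{a, a'} \<in> E" "{b, b'} \<in> E"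
    and dist: "distinct [c0, c, a, b, a', b']"
  shows "contains_T61 V E"
proof -
  define f where "f = (\<lambda>i::nat. [c0, c, a, b, a', b'] ! i)"
  have six: "{0..5::nat} = {0, 1, 2, 3, 4, 5}" by auto
  have "inj_on f {0..5}"
    unfolding inj_on_def f_def using dist by (auto simp: nth_eq_iff_index_eq)
  moreover have "f ` {0..5} \<subseteq> V"
    unfolding six f_def using edge_ends(2,3)[OF sg edges(1)] edge_ends(2,3)[OF sg edges(2)]
      edge_ends(2,3)[OF sg edges(3)] edge_ends(3)[OF sg edges(4)] edge_ends(3)[OF sg edges(5)]
    by auto
  moreover have "\<forall>(i, j)\<in>T61_edges. {f i, f j} \<in> E"
    unfolding T61_edges_def f_def using edges by auto
  ultimately show ?thesis unfolding contains_T61_def by blast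
qed

lemma no_T61:
  assumes "simple_graph V E" "\<not> contains_T61 V E"
    and "{c0, c} \<in> E" "{c0, a} \<in> E" "{c0, b} \<in> E" "{a, a'} \<in> E" "{b, b'} \<in> E"
    and "distinct [c0, c, a, b, a', b']"
  shows False
  using contains_T61I[OF assms(1,3-)] assms(2) by blast

lemma contains_T61_mono:
  assumes "contains_T61 V' E'" "V' \<subseteq> V" "E' \<subseteq> E"
  shows "contains_T61 V E"
proof -
  obtain f where "inj_on f {0..5}" "f ` {0..5} \<subseteq> V'" "\<forall>(i, j)\<in>T61_edges. {f i, f j} \<in> E'"
    using assms(1) unfolding contains_T61_def by blast
  then show ?thesis unfolding contains_T61_def using assms(2,3) by (intro exI[of _ f]) auto
qed

lemma delete_leaf:
  assumes sg: "simple_graph V E" and leaf: "nbr E l = {u}"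
  shows "simple_graph (V - {l}) {e\<in>E. l \<notin> e}"
    and "card E = Suc (card {e\<in>E. l \<notin> e})"
proof -
  show "simple_graph (V - {l}) {e\<in>E. l \<notin> e}" using sg unfolding simple_graph_def by auto
  have fE: "finite E" using simple_graph_finite_edges[OF sg] .
  have one: "card {e\<in>E. l \<in> e} = 1" using card_nbr_incident[OF sg, of l] leaf by simp
  have "{e\<in>E. l \<notin> e} = E - {e\<in>E. l \<in> e}" by auto
  then have "card {e\<in>E. l \<notin> e} = card E - 1" using fE one by (simp add: card_Diff_subset)
  moreover have "1 \<le> card E" using card_mono[OF fE, of "{e\<in>E. l \<in> e}"] one by auto
  ultimately show "card E = Suc (card {e\<in>E. l \<notin> e})" by simp
qed

text \<open>Deleting a leaf \<open>l\<close> with neighbour \<open>u\<close> keeps the graph connected: a walk between two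
  other vertices that passes through \<open>l\<close> enters and leaves it via \<open>u\<close>, so it can be cut short.\<close>
lemma delete_leaf_connected:
  assumes sg: "simple_graph V E" and c: "connected_graph V E" and leaf: "nbr E l = {u}"
  shows "connected_graph (V - {l}) {e\<in>E. l \<notin> e}"
proof -
  have only_u: "x = u" if "{l, x} \<in> E" for x
    using that nbr_iff[of x E l] unfolding leaf by simp
  have "{l, u} \<in> E" using nbr_iff[of u E l] unfolding leaf by simp
  then have ul: "u \<noteq> l" using edge_ends(1)[OF sg] by blast
  let ?R = "{(x, y). adj E x y}" and ?R' = "{(x, y). adj {e\<in>E. l \<notin> e} x y}"
  have reroute: "(w, if x = l then u else x) \<in> ?R'\<^sup>*" if "(w, x) \<in> ?R\<^sup>*" "w \<noteq> l" for w x
    using that(1)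
  proof (induction rule: rtrancl_induct)
    case (step x y)
    then have xy: "{x, y} \<in> E" by (simp add: adj_def)
    consider "x = l" | "y = l" "x \<noteq> l" | "x \<noteq> l" "y \<noteq> l" by blast
    then show ?case
    proof cases
      case 1 then show ?thesis using step.IH only_u xy ul by simp
    next
      case 2 then show ?thesis using step.IH only_u[of x] xy by (simp add: insert_commute)
    next
      case 3
      then have "(x, y) \<in> ?R'" using xy by (simp add: adj_def)
      then show ?thesis using step.IH 3 by (simp add: rtrancl_into_rtrancl)
    qed
  qed (use \<open>w \<noteq> l\<close> in simp)
  show ?thesis
    unfolding connected_graph_def
  proof (intro ballI)
    fix w x assume "w \<in> V - {l}" "x \<in> V - {l}"
    then show "(w, x) \<in> ?R'\<^sup>*"
      using reroute[of w x] c unfolding connected_graph_def by auto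
  qed
qed

lemma intersecting_pairs_cases:
  assumes two: "\<And>e. e \<in> F \<Longrightarrow> \<exists>x y. x \<noteq> y \<and> e = {x, y}"
    and meet: "\<And>e1 e2. e1 \<in> F \<Longrightarrow> e2 \<in> F \<Longrightarrow> e1 \<inter> e2 \<noteq> {}"
  obtains "F = {}"
  | z where "\<forall>e\<in>F. z \<in> e"
  | a b c where "a \<noteq> b" "a \<noteq> c" "b \<noteq> c" "F = {{a, b}, {a, c}, {b, c}}"
proof -
  consider "F = {}" | e0 a b where "e0 \<in> F" "a \<noteq> b" "e0 = {a, b}" using two by blast
  then show thesis
  proof cases
    case (2 e0 a b)
    consider "\<forall>e\<in>F. a \<in> e" | "\<forall>e\<in>F. b \<in> e"
      | e1 e2 where "e1 \<in> F" "a \<notin> e1" "e2 \<in> F" "b \<notin> e2" by blast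
    then show thesis
    proof cases
      case (3 e1 e2)
      have "b \<in> e1" "a \<in> e2" using meet[of e0 e1] meet[of e0 e2] 2 3 by auto
      then obtain c where c: "e1 = {b, c}" "c \<noteq> b" "c \<noteq> a"
        using two[of e1] 3 by (auto simp: doubleton_eq_iff)
      then have e2: "e2 = {a, c}" using two[of e2] meet[of e1 e2] 3 \<open>a \<in> e2\<close> by auto
      have "F = {{a, b}, {a, c}, {b, c}}"
      proof (intro equalityI subsetI)
        fix e assume e: "e \<in> F"
        then obtain x y where "x \<noteq> y" "e = {x, y}" using two by blast
        then show "e \<in> {{a, b}, {a, c}, {b, c}}"
          using meet[OF e \<open>e0 \<in> F\<close>] meet[OF e \<open>e1 \<in> F\<close>] meet[OF e \<open>e2 \<in> F\<close>] 2 c e2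
          by (auto simp: insert_commute)
      qed (use 2 3 c e2 in auto)
      then show thesis using that(3) 2 c by blast
    qed (use that in blast)+
  qed (use that in blast)
qed

text \<open>We write \<open>N = N(v)\<close>, \<open>H\<close> for the edges of \<open>G - v\<close>
  and \<open>F\<close> for the edges of \<open>H\<close> meeting \<open>N\<close>. Since \<open>e(G) = |N| + |H|\<close> and \<open>|N| \<le> p - 1\<close>,
  the goal is \<open>|H| \<le> p - 2\<close>.\<close>
definition hub :: "'a set \<Rightarrow> 'a set set \<Rightarrow> 'a \<Rightarrow> bool" where
  "hub V E v \<longleftrightarrow> simple_graph V E \<and> connected_graph V E \<and> \<not> contains_T61 V E \<and>
     v \<in> V \<and> 4 \<le> card (nbr E v) \<and> 6 \<le> card V"

definition outer_edges :: "'a set set \<Rightarrow> 'a \<Rightarrow> 'a set set" where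
  "outer_edges E v = {e\<in>E. v \<notin> e}"

definition touching_edges :: "'a set set \<Rightarrow> 'a \<Rightarrow> 'a set set" where
  "touching_edges E v = {e\<in>outer_edges E v. e \<inter> nbr E v \<noteq> {}}"

lemma
  assumes "hub V E v"
  shows hub_simple: "simple_graph V E" and hub_connected: "connected_graph V E"
    and hub_T61_free: "\<not> contains_T61 V E" and hub_in_V: "v \<in> V"
    and hub_degree: "4 \<le> card (nbr E v)" and hub_six: "6 \<le> card V"
  using assms by (auto simp: hub_def)

lemma notin_own_nbr: "simple_graph V E \<Longrightarrow> v \<notin> nbr E v"
  using edge_ends(1)[of V E v v] by (auto simp: nbr_iff)

lemma nbr_subset_V: "simple_graph V E \<Longrightarrow> nbr E v \<subseteq> V"
  using edge_ends(3)[of V E v] by (auto simp: nbr_iff)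

lemma finite_nbr: "simple_graph V E \<Longrightarrow> finite (nbr E v)"
  by (rule finite_subset[OF nbr_subset_V simple_graph_finite])

lemma card_E_split:
  assumes sg: "simple_graph V E"
  shows "card E = card (nbr E v) + card (outer_edges E v)"
proof -
  have "E = {e\<in>E. v \<in> e} \<union> outer_edges E v" "{e\<in>E. v \<in> e} \<inter> outer_edges E v = {}"
    unfolding outer_edges_def by auto
  moreover have "finite E" using simple_graph_finite_edges[OF sg] .
  ultimately have "card E = card {e\<in>E. v \<in> e} + card (outer_edges E v)"
    by (metis (no_types, lifting) card_Un_disjoint finite_Un)
  then show ?thesis using card_nbr_incident[OF sg, of v] by simp
qed

lemma edge_bound_from_H:
  assumes "hub V E v" "card (outer_edges E v) \<le> card V - 2"
  shows "card E \<le> 2 * card V - 3"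
  using assms(2) card_E_split[OF hub_simple[OF assms(1)], of v]
    card_nbr_le[OF hub_simple[OF assms(1)] hub_in_V[OF assms(1)]] hub_six[OF assms(1)]
  by linarith

lemma H_edgeE:
  assumes sg: "simple_graph V E" and "e \<in> outer_edges E v"
  obtains x y where "e = {x, y}" "{x, y} \<in> E" "x \<noteq> y" "x \<noteq> v" "y \<noteq> v"
proof -
  have "e \<in> E" "v \<notin> e" using assms by (auto simp: outer_edges_def)
  moreover obtain x y where "e = {x, y}" "x \<noteq> y" using edge_doubleton[OF sg \<open>e \<in> E\<close>] .
  ultimately show thesis using that by auto
qed

lemma F_iff:
  "{x, y} \<in> touching_edges E v \<longleftrightarrow>
     {x, y} \<in> E \<and> x \<noteq> v \<and> y \<noteq> v \<and> (x \<in> nbr E v \<or> y \<in> nbr E v)"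
  by (auto simp: touching_edges_def outer_edges_def)

lemma F_intro:
  "simple_graph V E \<Longrightarrow> {x, y} \<in> E \<Longrightarrow> x \<in> nbr E v \<Longrightarrow> y \<noteq> v \<Longrightarrow> {x, y} \<in> touching_edges E v"
  using notin_own_nbr[of V E v] by (auto simp: F_iff)

lemma F_edgeE:
  assumes sg: "simple_graph V E" and e: "e \<in> touching_edges E v"
  obtains a a' where "e = {a, a'}" "{a, a'} \<in> E" "a \<in> nbr E v" "a \<noteq> a'" "a' \<noteq> v"
proof -
  have "e \<in> outer_edges E v" using e by (simp add: touching_edges_def)
  then obtain x y where "e = {x, y}" "{x, y} \<in> E" "x \<noteq> y" "x \<noteq> v" "y \<noteq> v"
    by (rule H_edgeE[OF sg])
  moreover have "x \<in> nbr E v \<or> y \<in> nbr E v"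
    using e calculation(1) by (auto simp: touching_edges_def)
  ultimately show thesis using that[of x y] that[of y x] by (auto simp: insert_commute)
qed

lemma N_avoids:
  assumes "4 \<le> card (nbr E v)"
  shows "\<exists>b\<in>nbr E v. b \<noteq> x \<and> b \<noteq> y \<and> b \<noteq> w"
proof (rule ccontr)
  assume "\<not> ?thesis"
  then have "nbr E v \<subseteq> {x, y, w}" by auto
  then have "card (nbr E v) \<le> card {x, y, w}" by (intro card_mono) auto
  also have "\<dots> \<le> 3" by (simp add: card_insert_if)
  finally show False using assms by simp
qed

lemma two_legs_at_hub:
  assumes G: "hub V E v"
    and "c \<in> nbr E v" "a \<in> nbr E v" "b \<in> nbr E v" "{a, a'} \<in> E" "{b, b'} \<in> E"
    and "a' \<noteq> v" "b' \<noteq> v" "distinct [c, a, b, a', b']"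
  shows False
proof -
  note sg = hub_simple[OF G]
  have "v \<notin> nbr E v" using notin_own_nbr[OF sg] .
  then have dist: "distinct [v, c, a, b, a', b']" using assms(2-4,7-9) by auto
  have "{v, c} \<in> E" "{v, a} \<in> E" "{v, b} \<in> E" using assms(2-4) by (simp_all add: nbr_iff)
  from no_T61[OF sg hub_T61_free[OF G] this assms(5,6) dist] show False .
qed

text \<open>If two disjoint edges \<open>aa', bb'\<close> inside \<open>N\<close> exhaust \<open>N\<close>, then \<open>V = {v} \<union> N\<close>: a
  neighbour \<open>y \<notin> {v} \<union> N\<close> of one of the four would complete a \<open>T_6^1\<close> centred at \<open>v\<close>.\<close>
lemma matching_exhausting_N:
  assumes G: "hub V E v"
    and a: "{a, a'} \<in> E" "a \<in> nbr E v" "a' \<in> nbr E v"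
    and b: "{b, b'} \<in> E" "b \<in> nbr E v" "b' \<in> nbr E v"
    and dist: "distinct [a, b, a', b']" and N: "nbr E v \<subseteq> {a, b, a', b'}"
  shows "V \<subseteq> insert v (nbr E v)"
proof (rule connected_closed_subset[OF hub_connected[OF G] hub_in_V[OF G]])
  fix x y assume x: "x \<in> insert v (nbr E v)" and xy: "{x, y} \<in> E"
  show "y \<in> insert v (nbr E v)"
  proof (rule ccontr)
    assume y: "y \<notin> insert v (nbr E v)"
    have "x \<in> nbr E v" using x y xy by (auto simp: nbr_iff)
    note facts = a b dist xy y notin_own_nbr[OF hub_simple[OF G]]
    consider "x = a" | "x = a'" | "x = b" | "x = b'" using \<open>x \<in> nbr E v\<close> N by auto
    then show False
    proof cases
      case 1 then show False
        using two_legs_at_hub[OF G, of a' a b y b'] facts by (auto simp: insert_commute)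
    next
      case 2 then show False
        using two_legs_at_hub[OF G, of a a' b y b'] facts by auto
    next
      case 3 then show False
        using two_legs_at_hub[OF G, of b' b a y a'] facts by (auto simp: insert_commute)
    next
      case 4 then show False
        using two_legs_at_hub[OF G, of b b' a y a'] facts by auto
    qed
  qed
qed simp

text \<open>Any two edges of \<open>F\<close> meet. Two disjoint ones \<open>aa', bb'\<close> (with \<open>a, b \<in> N\<close>) together
  with a third neighbour of \<open>v\<close> would form \<open>T_6^1\<close>; if there is no third neighbour, then
  \<open>N = {a, a', b, b'}\<close>, so by the previous lemma \<open>p \<le> 5\<close>.\<close>
lemma F_intersecting:
  assumes G: "hub V E v" and e1: "e1 \<in> touching_edges E v" and e2: "e2 \<in> touching_edges E v"
  shows "e1 \<inter> e2 \<noteq> {}"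
proof
  assume disjoint: "e1 \<inter> e2 = {}"
  note sg = hub_simple[OF G]
  obtain a a' where a: "e1 = {a, a'}" "{a, a'} \<in> E" "a \<in> nbr E v" "a \<noteq> a'" "a' \<noteq> v"
    using F_edgeE[OF sg e1] .
  obtain b b' where b: "e2 = {b, b'}" "{b, b'} \<in> E" "b \<in> nbr E v" "b \<noteq> b'" "b' \<noteq> v"
    using F_edgeE[OF sg e2] .
  have dist: "distinct [a, b, a', b']" using disjoint a b by auto
  show False
  proof (cases "nbr E v \<subseteq> {a, b, a', b'}")
    case False
    then obtain c where "c \<in> nbr E v" "c \<notin> {a, b, a', b'}" by blast
    then show False using two_legs_at_hub[OF G, of c a b a' b'] a b dist by auto
  next
    case True
    have "a' \<in> nbr E v" "b' \<in> nbr E v"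
      using True N_avoids[OF hub_degree[OF G], of a b b'] N_avoids[OF hub_degree[OF G], of a b a']
      by auto
    then have "V \<subseteq> insert v (nbr E v)"
      using matching_exhausting_N[OF G] a b dist True by blast
    then have "card V \<le> card (insert v (nbr E v))" using finite_nbr[OF sg] by (intro card_mono) auto
    also have "\<dots> \<le> card {v, a, b, a', b'}" using True by (intro card_mono) auto
    also have "\<dots> \<le> 5" by (simp add: card_insert_if)
    finally show False using hub_six[OF G] by simp
  qed
qed

text \<open>If no edge of \<open>G - v\<close> touches \<open>N\<close>, connectivity forces \<open>V = {v} \<union> N\<close> and \<open>H = {}\<close>.\<close>
lemma H_empty_if_F_empty:
  assumes G: "hub V E v" and F: "touching_edges E v = {}"
  shows "outer_edges E v = {}"
proof -
  note sg = hub_simple[OF G]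
  have V: "V \<subseteq> insert v (nbr E v)"
  proof (rule connected_closed_subset[OF hub_connected[OF G] hub_in_V[OF G]])
    fix x y assume "x \<in> insert v (nbr E v)" "{x, y} \<in> E"
    then show "y \<in> insert v (nbr E v)" using F_intro[OF sg, of x y v] F by (auto simp: nbr_iff)
  qed simp
  show ?thesis
  proof (rule ccontr)
    assume "outer_edges E v \<noteq> {}"
    then obtain x y where "{x, y} \<in> E" "x \<noteq> v" "y \<noteq> v" using H_edgeE[OF sg] by blast
    moreover have "x \<in> nbr E v" using calculation V edge_ends[OF sg] by blast
    ultimately show False using F_intro[OF sg] F by blast
  qed
qed

text \<open>If \<open>p, q \<in> N\<close> are adjacent and \<open>r \<notin> {v} \<union> N\<close> is a neighbour of \<open>p\<close>, then all
  neighbours of \<open>r\<close> lie in \<open>N\<close>: otherwise \<open>p\<close> is the centre of a \<open>T_6^1\<close> with short leg \<open>q\<close>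
  and long legs through \<open>v\<close> and \<open>r\<close>.\<close>
lemma neighbour_beyond_N_pair:
  assumes G: "hub V E v"
    and pq: "p \<in> nbr E v" "q \<in> nbr E v" "{p, q} \<in> E"
    and r: "{p, r} \<in> E" "r \<notin> nbr E v" "r \<noteq> v" and y: "{r, y} \<in> E"
  shows "y \<in> nbr E v"
proof (rule ccontr)
  assume y_out: "y \<notin> nbr E v"
  note sg = hub_simple[OF G]
  have "y \<noteq> v" using r(2) y by (auto simp: nbr_iff insert_commute)
  obtain \<beta> where \<beta>: "\<beta> \<in> nbr E v" "\<beta> \<noteq> p" "\<beta> \<noteq> q"
    using N_avoids[OF hub_degree[OF G], of p q q] by blast
  have "p \<noteq> q" "r \<noteq> y" using edge_ends(1)[OF sg pq(3)] edge_ends(1)[OF sg y] by auto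
  then have dist: "distinct [p, q, v, r, \<beta>, y]"
    using pq r \<beta> y_out \<open>y \<noteq> v\<close> notin_own_nbr[OF sg] by auto
  have "{p, v} \<in> E" "{v, \<beta>} \<in> E" using pq(1) \<beta>(1) by (auto simp: nbr_iff insert_commute)
  from no_T61[OF sg hub_T61_free[OF G] pq(3) this(1) r(1) this(2) y dist] show False .
qed

text \<open>If \<open>F\<close> is a triangle \<open>abc\<close>, at least two of its corners lie in \<open>N\<close>, so by the previous
  lemma and connectivity \<open>V = {v} \<union> N \<union> {a, b, c}\<close>.\<close>
lemma triangle_F_closed:
  assumes G: "hub V E v" and F: "touching_edges E v = {{a, b}, {a, c}, {b, c}}"
  shows "V \<subseteq> insert v (nbr E v \<union> {a, b, c})"
proof -
  note sg = hub_simple[OF G]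
  have triangle: "{a, b} \<in> touching_edges E v" "{a, c} \<in> touching_edges E v"
    "{b, c} \<in> touching_edges E v" using F by auto
  then have edges: "{a, b} \<in> E" "{a, c} \<in> E" "{b, c} \<in> E"
    and corners: "a \<noteq> v" "b \<noteq> v" "c \<noteq> v" by (auto simp: F_iff)
  have meets_N: "a \<in> nbr E v \<or> b \<in> nbr E v" "a \<in> nbr E v \<or> c \<in> nbr E v"
    "b \<in> nbr E v \<or> c \<in> nbr E v"
    using triangle by (auto simp: F_iff)
  have F_ends: "y \<in> {a, b, c}" if "{x, y} \<in> touching_edges E v" for x y
    using that F by (auto simp: doubleton_eq_iff)
  note beyond = neighbour_beyond_N_pair[OF G]
  show ?thesis
  proof (rule connected_closed_subset[OF hub_connected[OF G] hub_in_V[OF G]])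
    fix x y assume x: "x \<in> insert v (nbr E v \<union> {a, b, c})" and xy: "{x, y} \<in> E"
    consider "x = v" | "x \<in> nbr E v" | "x \<in> {a, b, c}" "x \<notin> nbr E v" using x by blast
    then show "y \<in> insert v (nbr E v \<union> {a, b, c})"
    proof cases
      case 1 then show ?thesis using xy by (simp add: nbr_iff)
    next
      case 2 then show ?thesis using F_intro[OF sg xy, where v = v] F_ends by blast
    next
      case 3
      then have "y \<in> nbr E v"
        using meets_N edges corners xy beyond[of b c a y] beyond[of a c b y] beyond[of a b c y]
        by (auto simp: insert_commute)
      then show ?thesis by blast
    qed
  qed simp
qed

text \<open>Consequently, if \<open>F\<close> is a triangle, every edge of \<open>H\<close> lies in \<open>F\<close> and \<open>|H| \<le> 3\<close>.\<close>
lemma card_H_if_F_triangle: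
  assumes G: "hub V E v" and F: "touching_edges E v = {{a, b}, {a, c}, {b, c}}"
  shows "card (outer_edges E v) \<le> 3"
proof -
  note sg = hub_simple[OF G]
  have "outer_edges E v \<subseteq> touching_edges E v"
  proof
    fix e assume "e \<in> outer_edges E v"
    then obtain x y where e: "e = {x, y}" "{x, y} \<in> E" "x \<noteq> y" "x \<noteq> v" "y \<noteq> v"
      using H_edgeE[OF sg] by blast
    show "e \<in> touching_edges E v"
    proof (cases "x \<in> nbr E v \<or> y \<in> nbr E v")
      case False
      then have "x \<in> {a, b, c}" "y \<in> {a, b, c}"
        using triangle_F_closed[OF G F] e edge_ends[OF sg] by blast+
      then show ?thesis using e F by (auto simp: insert_commute)
    qed (use e F_iff[of x y E v] in blast)
  qed
  then have "card (outer_edges E v) \<le> card (touching_edges E v)" using F by (intro card_mono) auto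
  also have "\<dots> \<le> 3" using F by (simp add: card_insert_if)
  finally show ?thesis .
qed

lemma trapped_star_closed:
  assumes G: "hub V E v" and star: "\<forall>e\<in>touching_edges E v. z \<in> e"
    and trapped: "\<And>s t. {z, s} \<in> E \<Longrightarrow> s \<notin> nbr E v \<Longrightarrow> s \<noteq> v \<Longrightarrow> {s, t} \<in> E \<Longrightarrow> t = z"
  shows "V \<subseteq> insert v (insert z (nbr E v \<union> nbr E z))"
proof (rule connected_closed_subset[OF hub_connected[OF G] hub_in_V[OF G]])
  fix x y assume x: "x \<in> insert v (insert z (nbr E v \<union> nbr E z))" and xy: "{x, y} \<in> E"
  consider "x = v" | "x = z" | "x \<in> nbr E v" "x \<noteq> z"
    | "x \<in> nbr E z" "x \<notin> nbr E v" "x \<noteq> v" using x by blast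
  then show "y \<in> insert v (insert z (nbr E v \<union> nbr E z))"
  proof cases
    case 1 then show ?thesis using xy by (simp add: nbr_iff)
  next
    case 2 then show ?thesis using xy by (simp add: nbr_iff)
  next
    case 3
    then have "y = v \<or> y \<in> nbr E v \<or> {x, y} \<in> touching_edges E v"
      using F_intro[OF hub_simple[OF G] xy, where v = v] by blast
    then show ?thesis using star 3 by auto
  next
    case 4 then show ?thesis using trapped[of x y] xy by (simp add: nbr_iff)
  qed
qed simp

text \<open>For a trapped star every edge of \<open>H\<close> contains \<open>z\<close>, so \<open>|H| \<le> p - 2\<close>.\<close>
lemma card_H_if_star_trapped:
  assumes G: "hub V E v" and z: "z \<in> V" "z \<noteq> v" and star: "\<forall>e\<in>touching_edges E v. z \<in> e"
    and trapped: "\<And>s t. {z, s} \<in> E \<Longrightarrow> s \<notin> nbr E v \<Longrightarrow> s \<noteq> v \<Longrightarrow> {s, t} \<in> E \<Longrightarrow> t = z"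
  shows "card (outer_edges E v) \<le> card V - 2"
proof (rule star_edges_bound[OF hub_simple[OF G] _ _ z(2,1) hub_in_V[OF G]])
  note sg = hub_simple[OF G]
  have V: "V \<subseteq> insert v (insert z (nbr E v \<union> nbr E z))"
    using trapped by (rule trapped_star_closed[OF G star])
  show "outer_edges E v \<subseteq> E" by (auto simp: outer_edges_def)
  fix e assume "e \<in> outer_edges E v"
  then obtain x y where e: "e = {x, y}" "{x, y} \<in> E" "x \<noteq> y" "x \<noteq> v" "y \<noteq> v"
    using H_edgeE[OF sg] by blast
  have "z \<in> e"
  proof (cases "x \<in> nbr E v \<or> y \<in> nbr E v")
    case True
    then have "e \<in> touching_edges E v" using e F_iff[of x y E v] by blast
    then show ?thesis using star by blast
  next
    case False
    then have "x = z \<or> x \<in> nbr E z"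
      using V e edge_ends[OF sg] by blast
    then show ?thesis using trapped[of x y] False e by (auto simp: nbr_iff)
  qed
  then show "v \<notin> e \<and> z \<in> e" using e by auto
qed

lemma N_neighbours:
  assumes G: "hub V E v" and star: "\<forall>e\<in>touching_edges E v. z \<in> e"
    and x: "x \<in> nbr E v" "x \<noteq> z" and xy: "{x, y} \<in> E"
  shows "y = v \<or> y = z"
proof (rule ccontr)
  assume "\<not> (y = v \<or> y = z)"
  then have "{x, y} \<in> touching_edges E v" using F_intro[OF hub_simple[OF G] xy x(1)] by simp
  then show False using star x(2) \<open>\<not> (y = v \<or> y = z)\<close> by auto
qed

lemma beyond_N:
  assumes G: "hub V E v" and z: "z \<in> nbr E v" and star: "\<forall>e\<in>touching_edges E v. z \<in> e"
    and r: "r \<notin> nbr E v" "r \<noteq> v" and s: "{r, s} \<in> E" "s \<noteq> z"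
  shows "s \<notin> nbr E v" "s \<noteq> v"
proof -
  show "s \<noteq> v" using r(1) s(1) by (auto simp: nbr_iff insert_commute)
  show "s \<notin> nbr E v"
  proof
    assume "s \<in> nbr E v"
    moreover have "{s, r} \<in> E" using s(1) by (simp add: insert_commute)
    ultimately have "{s, r} \<in> touching_edges E v" using F_intro[OF hub_simple[OF G]] r(2) by simp
    then show False using star r(1) s(2) z by auto
  qed
qed

text \<open>If \<open>z - r - s\<close> is a path leaving \<open>{v} \<union> N\<close>, then \<open>z\<close> has no neighbours besides \<open>v, r, s\<close>:
  a further neighbour \<open>y\<close> would make \<open>z\<close> the centre of a \<open>T_6^1\<close> with short leg \<open>y\<close> and
  long legs \<open>r s\<close> and \<open>v \<beta>\<close> for some \<open>\<beta> \<in> N\<close>.\<close>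
lemma z_neighbours:
  assumes G: "hub V E v" and z: "z \<in> nbr E v" and star: "\<forall>e\<in>touching_edges E v. z \<in> e"
    and r: "r \<notin> nbr E v" "r \<noteq> v" "{z, r} \<in> E" and s: "{r, s} \<in> E" "s \<noteq> z"
    and y: "{z, y} \<in> E"
  shows "y \<in> {v, r, s}"
proof (rule ccontr)
  assume y_new: "y \<notin> {v, r, s}"
  note sg = hub_simple[OF G]
  obtain \<beta> where \<beta>: "\<beta> \<in> nbr E v" "\<beta> \<noteq> z" "\<beta> \<noteq> y"
    using N_avoids[OF hub_degree[OF G], of z y y] by blast
  have s': "s \<notin> nbr E v" "s \<noteq> v" using beyond_N[OF G z star r(1,2) s] by auto
  have "z \<noteq> y" "r \<noteq> s" using edge_ends(1)[OF sg y] edge_ends(1)[OF sg s(1)] by auto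
  then have dist: "distinct [z, y, r, v, s, \<beta>]"
    using r s s' y_new \<beta> z notin_own_nbr[OF sg] by auto
  have "{z, v} \<in> E" "{v, \<beta>} \<in> E" using z \<beta>(1) by (auto simp: nbr_iff insert_commute)
  from no_T61[OF sg hub_T61_free[OF G] y r(3) this(1) s(1) this(2) dist] show False .
qed

text \<open>If such a path \<open>z - r - s\<close> exists, any \<open>l \<in> N - {z}\<close> is a leaf (its only possible
  neighbours are \<open>v\<close> and \<open>z\<close>, and \<open>z\<close> is excluded by the previous lemma), and \<open>v\<close>, \<open>N\<close>,
  \<open>r\<close>, \<open>s\<close> give \<open>p \<ge> 7\<close>.\<close>
lemma leaf_if_path:
  assumes G: "hub V E v" and z: "z \<in> nbr E v" and star: "\<forall>e\<in>touching_edges E v. z \<in> e"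
    and r: "r \<notin> nbr E v" "r \<noteq> v" "{z, r} \<in> E" and s: "{r, s} \<in> E" "s \<noteq> z"
  shows "\<exists>l\<in>V. leaf E l" "7 \<le> card V"
proof -
  note sg = hub_simple[OF G]
  have s': "s \<notin> nbr E v" "s \<noteq> v" using beyond_N[OF G z star r(1,2) s] by auto
  obtain l where l: "l \<in> nbr E v" "l \<noteq> z" using N_avoids[OF hub_degree[OF G], of z z z] by blast
  have "nbr E l = {v}"
  proof (intro equalityI subsetI)
    fix y assume "y \<in> nbr E l"
    then have ly: "{l, y} \<in> E" by (simp add: nbr_iff)
    have "y \<noteq> z"
    proof
      assume "y = z"
      then have "l \<in> {v, r, s}"
        using z_neighbours[OF G z star r s, of l] ly by (simp add: insert_commute)
      then show False using l r s' notin_own_nbr[OF sg] by auto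
    qed
    then show "y \<in> {v}" using N_neighbours[OF G star l ly] by simp
  next
    fix y assume "y \<in> {v}"
    then show "y \<in> nbr E l" using l(1) by (simp add: nbr_iff insert_commute)
  qed
  then show "\<exists>l\<in>V. leaf E l" using l nbr_subset_V[OF sg] by (auto simp: leaf_def)
  have "r \<noteq> s" using edge_ends(1)[OF sg s(1)] .
  then have "card (nbr E v) + 3 = card (insert v (insert r (insert s (nbr E v))))"
    using finite_nbr[OF sg] notin_own_nbr[OF sg] r s' by (simp add: card_insert_if)
  also have "\<dots> \<le> card V"
    using nbr_subset_V[OF sg] hub_in_V[OF G] edge_ends(2,3)[OF sg s(1)] simple_graph_finite[OF sg]
    by (intro card_mono) auto
  finally show "7 \<le> card V" using hub_degree[OF G] by simp
qed

lemma star_in_N_cases: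
  assumes G: "hub V E v" and z: "z \<in> nbr E v" and star: "\<forall>e\<in>touching_edges E v. z \<in> e"
  shows "card (outer_edges E v) \<le> card V - 2 \<or> ((\<exists>l\<in>V. leaf E l) \<and> 7 \<le> card V)"
proof (cases "\<exists>r s. {z, r} \<in> E \<and> r \<notin> nbr E v \<and> r \<noteq> v \<and> {r, s} \<in> E \<and> s \<noteq> z")
  case True
  then obtain r s where "{z, r} \<in> E" "r \<notin> nbr E v" "r \<noteq> v" "{r, s} \<in> E" "s \<noteq> z" by blast
  then show ?thesis using leaf_if_path[OF G z star] by blast
next
  case False
  have "z \<in> V" "z \<noteq> v" using z nbr_subset_V[OF hub_simple[OF G]] notin_own_nbr[OF hub_simple[OF G]]
    by auto
  then show ?thesis using card_H_if_star_trapped[OF G _ _ star] False by blast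
qed

text \<open>Suppose all edges of \<open>F\<close> pass through \<open>z \<noteq> v\<close>. If \<open>z\<close> has two neighbours
  \<open>x\<^sub>1, x\<^sub>2 \<in> N\<close>, the star at \<open>z\<close> is trapped: a path \<open>z - s - t\<close> with \<open>s \<notin> {v} \<union> N\<close>
  and \<open>t \<noteq> z\<close> would give a \<open>T_6^1\<close> centred at \<open>z\<close> with legs \<open>x\<^sub>2\<close>, \<open>s t\<close> and
  \<open>x\<^sub>1 v\<close> (here \<open>t \<notin> N\<close>, since otherwise \<open>st\<close> would be an edge of \<open>F\<close> missing \<open>z\<close>).\<close>
lemma two_N_neighbours_trap:
  assumes G: "hub V E v" and star: "\<forall>e\<in>touching_edges E v. z \<in> e" and z_ne_v: "z \<noteq> v"
    and x: "x1 \<in> nbr E v" "x2 \<in> nbr E v" "x1 \<noteq> x2" "{z, x1} \<in> E" "{z, x2} \<in> E"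
    and s: "{z, s} \<in> E" "s \<notin> nbr E v" "s \<noteq> v" and t: "{s, t} \<in> E"
  shows "t = z"
proof (rule ccontr)
  assume "t \<noteq> z"
  note sg = hub_simple[OF G]
  have "t \<notin> nbr E v"
  proof
    assume "t \<in> nbr E v"
    moreover have "{t, s} \<in> E" using t by (simp add: insert_commute)
    ultimately have "{t, s} \<in> touching_edges E v" using F_intro[OF sg] s(3) by simp
    then show False using star \<open>t \<noteq> z\<close> edge_ends(1)[OF sg s(1)] by auto
  qed
  moreover have "t \<noteq> v" using s(2) t by (auto simp: nbr_iff insert_commute)
  moreover have "z \<noteq> s" "s \<noteq> t" "z \<noteq> x1" "z \<noteq> x2"
    using edge_ends(1)[OF sg s(1)] edge_ends(1)[OF sg t] edge_ends(1)[OF sg x(4)]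
      edge_ends(1)[OF sg x(5)] by auto
  ultimately have dist: "distinct [z, x2, s, x1, t, v]"
    using s x \<open>t \<noteq> z\<close> z_ne_v notin_own_nbr[OF sg] by auto
  have "{x1, v} \<in> E" using x(1) by (simp add: nbr_iff insert_commute)
  from no_T61[OF sg hub_T61_free[OF G] x(5) s(1) x(4) t this dist] show False .
qed

text \<open>The case where all edges of \<open>F \<noteq> {}\<close> pass through \<open>z \<notin> N\<close>: either \<open>z\<close> has two
  neighbours in \<open>N\<close> and the previous lemma applies, or \<open>F\<close> is a single edge \<open>z x\<^sub>0\<close>, i.e. a
  star centred at \<open>x\<^sub>0 \<in> N\<close>.\<close>
lemma star_outside_N_cases:
  assumes G: "hub V E v" and z: "z \<notin> nbr E v" and star: "\<forall>e\<in>touching_edges E v. z \<in> e"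
    and nonempty: "touching_edges E v \<noteq> {}"
  shows "card (outer_edges E v) \<le> card V - 2 \<or> (\<exists>x\<in>nbr E v. \<forall>e\<in>touching_edges E v. x \<in> e)"
proof -
  note sg = hub_simple[OF G]
  obtain e0 where "e0 \<in> touching_edges E v" using nonempty by blast
  then obtain x0 z' where e0: "e0 = {x0, z'}" "{x0, z'} \<in> E" "x0 \<in> nbr E v" "z' \<noteq> v"
    by (rule F_edgeE[OF sg])
  moreover have "z \<in> e0" using star \<open>e0 \<in> touching_edges E v\<close> by blast
  ultimately have "z' = z" using z by auto
  then have x0: "x0 \<in> nbr E v" "{z, x0} \<in> E" and z_ne_v: "z \<noteq> v" and z_in_V: "z \<in> V"
    using e0 edge_ends(3)[OF sg e0(2)] by (auto simp: insert_commute)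
  show ?thesis
  proof (cases "\<exists>x1 x2. x1 \<in> nbr E v \<and> x2 \<in> nbr E v \<and> x1 \<noteq> x2 \<and> {z, x1} \<in> E \<and> {z, x2} \<in> E")
    case True
    then obtain x1 x2
      where x: "x1 \<in> nbr E v" "x2 \<in> nbr E v" "x1 \<noteq> x2" "{z, x1} \<in> E" "{z, x2} \<in> E"
      by blast
    note trap = two_N_neighbours_trap[OF G star z_ne_v x]
    show ?thesis using card_H_if_star_trapped[OF G z_in_V z_ne_v star trap] ..
  next
    case False
    have "x0 \<in> e" if e: "e \<in> touching_edges E v" for e
    proof -
      obtain w w' where w: "e = {w, w'}" "{w, w'} \<in> E" "w \<in> nbr E v"
        using F_edgeE[OF sg e] by blast
      have "z \<in> e" "z \<noteq> w" using star e z w(3) by auto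
      then have "{z, w} \<in> E" using w(1,2) by (auto simp: insert_commute)
      then have "w = x0" using False w(3) x0 by blast
      then show ?thesis using w(1) by simp
    qed
    then show ?thesis using x0 by blast
  qed
qed

lemma hub_cases:
  assumes G: "hub V E v"
  shows "card (outer_edges E v) \<le> card V - 2 \<or> ((\<exists>l\<in>V. leaf E l) \<and> 7 \<le> card V)"
proof (rule intersecting_pairs_cases[of "touching_edges E v"])
  fix e assume "e \<in> touching_edges E v"
  then show "\<exists>x y. x \<noteq> y \<and> e = {x, y}" using F_edgeE[OF hub_simple[OF G]] by metis
next
  fix e1 e2 assume "e1 \<in> touching_edges E v" "e2 \<in> touching_edges E v"
  then show "e1 \<inter> e2 \<noteq> {}" by (rule F_intersecting[OF G])
next
  assume "touching_edges E v = {}"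
  then show ?thesis using H_empty_if_F_empty[OF G] by simp
next
  fix z assume star: "\<forall>e\<in>touching_edges E v. z \<in> e"
  show ?thesis
  proof (cases "z \<in> nbr E v \<or> touching_edges E v = {}")
    case True then show ?thesis using star_in_N_cases[OF G _ star] H_empty_if_F_empty[OF G] by auto
  next
    case False
    then show ?thesis using star_outside_N_cases[OF G _ star] star_in_N_cases[OF G] by blast
  qed
next
  fix a b c assume "touching_edges E v = {{a, b}, {a, c}, {b, c}}"
  then have "card (outer_edges E v) \<le> 3" by (rule card_H_if_F_triangle[OF G])
  then have "card (outer_edges E v) \<le> card V - 2" using hub_six[OF G] by linarith
  then show ?thesis ..
qed

lemma bound_or_leaf:
  assumes sg: "simple_graph V E" and c: "connected_graph V E" and free: "\<not> contains_T61 V E"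
    and six: "6 \<le> card V"
  shows "card E \<le> 2 * card V - 3 \<or> ((\<exists>l\<in>V. leaf E l) \<and> 7 \<le> card V)"
proof (cases "\<forall>x\<in>V. card (nbr E x) \<le> 3")
  case True
  then show ?thesis using max_degree_3_bound[OF sg _ six] by blast
next
  case False
  then obtain v where "v \<in> V" "4 \<le> card (nbr E v)" by (auto simp: not_le)
  then have G: "hub V E v" using assms by (simp add: hub_def)
  show ?thesis using hub_cases[OF G] edge_bound_from_H[OF G] by blast
qed

text \<open>Main theorem, by induction on the number of vertices: deleting a leaf preserves all
  hypotheses (here \<open>p \<ge> 7\<close> is needed to keep \<open>p - 1 \<ge> 6\<close>) and removes one edge, while the
  bound drops by two.\<close>
theorem lemma2p4:
  fixes V :: "'a set" and E :: "'a set set"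
  assumes "simple_graph V E"
    and "connected_graph V E"
    and "card V \<ge> 6"
    and "\<not> contains_T61 V E"
  shows "card E \<le> 2 * card V - 3"
  using assms
proof (induction "card V" arbitrary: V E rule: less_induct)
  case less
  consider "card E \<le> 2 * card V - 3" | l where "l \<in> V" "leaf E l" "7 \<le> card V"
    using bound_or_leaf[OF less.prems(1,2,4,3)] by blast
  then show ?case
  proof cases
    case 1
    then show ?thesis .
  next
    case (2 l)
    then obtain u where "nbr E l = {u}" by (auto simp: leaf_def)
    let ?E' = "{e\<in>E. l \<notin> e}"
    have simple': "simple_graph (V - {l}) ?E'" and one_edge: "card E = Suc (card ?E')"
      using delete_leaf[OF less.prems(1) \<open>nbr E l = {u}\<close>] by auto
    have connected': "connected_graph (V - {l}) ?E'"
      using delete_leaf_connected[OF less.prems(1,2) \<open>nbr E l = {u}\<close>] .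
    have free': "\<not> contains_T61 (V - {l}) ?E'"
      using less.prems(4) contains_T61_mono[of "V - {l}" ?E' V E] by auto
    have fewer: "card (V - {l}) = card V - 1" using \<open>l \<in> V\<close> by simp
    then have "card ?E' \<le> 2 * card (V - {l}) - 3"
      using less.hyps[OF _ simple' connected' _ free'] \<open>7 \<le> card V\<close> by simp
    then show ?thesis using one_edge fewer \<open>7 \<le> card V\<close> by simp
  qed
qed

end
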